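(* Let $d\ge2$, $\varepsilon\in(0,1)$, $c\in\{1,2,\dots\}\cup\{\infty\}$, and let $W$ be the gap process of the $d$-ball SBBS. Let $\gamma=\min\{t\in\mathbb Z_{\ge0}: W^i_t\ge1\text{ for all }1\le i\le d-1\}$. Then for every $x\in\mathbb Z^{d-1}_{\ge0}$, $\mathbb E[\gamma\mid W_0=x]<\infty$.
   Context: Stochastic box-ball system (SBBS). Fix an error probability $\varepsilon\in[0,1]$ and a capacity $c\in\{1,2,\dots\}\cup\{\infty\}$. A configuration is $\zeta\in\{0,1\}^{\mathbb N}$, $\mathbb N=\{1,2,\dots\}$, with finitely many $1$'s (balls). Given $\zeta$, the stochastic carrier process $\Gamma$ is defined by $\Gamma(0)=0$ and recursively (with fresh independent randomness at each $k$): $\Gamma(k)=\Gamma(k-1)+1$ with probability $1-\varepsilon$ (and $\Gamma(k)=\Gamma(k-1)$ otherwise) if $\zeta(k)=1$ and $\Gamma(k-1)<c$; $\Gamma(k)=\Gamma(k-1)-1$ if $\zeta(k)=0$ and $\Gamma(k-1)\ge1$; $\Gamma(k)=\Gamma(k-1)$ otherwise. The new configuration is $\zeta'(k)=\mathbf 1(\Gamma(k)-\Gamma(k-1)=-1)+\mathbf 1(\Gamma(k)=\Gamma(k-1),\ \zeta(k)=1)$. Iterating independently gives the SBBS trajectory $(\zeta_t)_{t\in\mathbb Z_{\ge0}}$. The number $d$ of balls is conserved; $\zeta^{(1)}_t<\dots<\zeta^{(d)}_t$ denote the ball positions. The gap process is $W_t=(W^1_t,\dots,W^{d-1}_t)$,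 $W^i_t=\zeta^{(i+1)}_t-\zeta^{(i)}_t-1$; it is a time-homogeneous Markov chain on $\mathbb Z^{d-1}_{\ge0}$ whose law depends only on $W_0$. *)

theory Defs
  imports "HOL-Probability.Probability"
begin

text \<open>A configuration is the (finite) set of occupied sites in {1,2,...}.
  The randomness of the SBBS is realised by an i.i.d. field of coins
  omega (t,k), t = time, k = site; coin True (probability 1 - eps) means that
  the carrier picks up the ball at site k at time step t (when it is allowed to).\<close>

fun carrier :: "enat \<Rightarrow> nat set \<Rightarrow> (nat \<Rightarrow> bool) \<Rightarrow> nat \<Rightarrow> nat" where
  "carrier c \<zeta> b 0 = 0"
| "carrier c \<zeta> b (Suc k) =
     (let g = carrier c \<zeta> b k in
      if Suc k \<in> \<zeta> \<and> enat g < c then (if b (Suc k) then g + 1 else g)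
      else if Suc k \<notin> \<zeta> \<and> g \<ge> 1 then g - 1
      else g)"

definition sbbs_step :: "enat \<Rightarrow> nat set \<Rightarrow> (nat \<Rightarrow> bool) \<Rightarrow> nat set" where
  "sbbs_step c \<zeta> b =
     {k. k \<ge> 1 \<and>
        (carrier c \<zeta> b k + 1 = carrier c \<zeta> b (k - 1) \<or>
         (carrier c \<zeta> b k = carrier c \<zeta> b (k - 1) \<and> k \<in> \<zeta>))}"

fun sbbs_traj :: "enat \<Rightarrow> nat set \<Rightarrow> (nat \<times> nat \<Rightarrow> bool) \<Rightarrow> nat \<Rightarrow> nat set" where
  "sbbs_traj c \<zeta>0 \<omega> 0 = \<zeta>0"
| "sbbs_traj c \<zeta>0 \<omega> (Suc t) = sbbs_step c (sbbs_traj c \<zeta>0 \<omega> t) (\<lambda>k. \<omega> (t, k))"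

definition coin_space :: "real \<Rightarrow> (nat \<times> nat \<Rightarrow> bool) measure" where
  "coin_space \<epsilon> = PiM UNIV (\<lambda>_. measure_pmf (bernoulli_pmf (1 - \<epsilon>)))"

definition ball_positions :: "nat set \<Rightarrow> nat list" where
  "ball_positions \<zeta> = sorted_list_of_set \<zeta>"

definition gaps :: "nat set \<Rightarrow> nat list" where
  "gaps \<zeta> = (let p = ball_positions \<zeta> in
              map (\<lambda>i. p ! (i + 1) - p ! i - 1) [0..<length p - 1])"

definition all_gaps_pos :: "nat set \<Rightarrow> bool" where
  "all_gaps_pos \<zeta> \<longleftrightarrow> (\<forall>i < length (gaps \<zeta>). gaps \<zeta> ! i \<ge> 1)"

definition gamma_time :: "enat \<Rightarrow> nat set \<Rightarrow> (nat \<times> nat \<Rightarrow> bool) \<Rightarrow> ennreal" where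
  "gamma_time c \<zeta>0 \<omega> =
     (if \<exists>t. all_gaps_pos (sbbs_traj c \<zeta>0 \<omega> t)
      then of_nat (LEAST t. all_gaps_pos (sbbs_traj c \<zeta>0 \<omega> t)) else \<infinity>)"

end

theory Submission
  imports Defs
begin

text \<open>Any configuration of \<open>d\<close> balls can be turned into one with all gaps positive by at
  most \<open>d\<^sup>2\<close> single-ball shifts \<open>a \<mapsto> a + 1\<close>: move the top ball \<open>d\<close> sites up and
  recurse on the others. One SBBS step performs such a shift when the carrier picks up
  exactly the shifted ball, an event prescribed by at most \<open>d\<close> coins. So whatever happened
  before time \<open>t\<close>, the coins of the next \<open>d\<^sup>2\<close> steps (which are independent of the
  past) make all gaps positive with probability at least
  \<open>p = min \<epsilon> (1 - \<epsilon>) ^ d\<^sup>3\<close>. Hence \<open>P(\<gamma> \<ge> n (d\<^sup>2 + 1)) \<le> (1 - p) ^ n\<close>, and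
  \<open>\<gamma>\<close> has finite expectation.\<close>

section \<open>Hitting times and geometric decay\<close>

lemma of_nat_le_block_count:
  assumes "T > 0" "\<forall>t<m. \<not> P t"
  shows "of_nat m \<le> of_nat T * (\<Sum>n. of_bool (\<forall>t<n * T. \<not> P t) :: ennreal)"
proof -
  have "of_bool (\<forall>t<n * T. \<not> P t) = (1 :: ennreal)" if "n < Suc (m div T)" for n
  proof -
    have "n * T \<le> m" using that assms(1) by (simp add: less_eq_div_iff_mult_less_eq[symmetric])
    then show ?thesis using assms(2) by simp
  qed
  then have "of_nat (Suc (m div T)) = (\<Sum>n<Suc (m div T). of_bool (\<forall>t<n * T. \<not> P t) :: ennreal)"
    by simp
  also have "\<dots> \<le> (\<Sum>n. of_bool (\<forall>t<n * T. \<not> P t))"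
    by (intro sum_le_suminf summableI) auto
  finally have "of_nat T * of_nat (Suc (m div T))
      \<le> of_nat T * (\<Sum>n. of_bool (\<forall>t<n * T. \<not> P t) :: ennreal)"
    by (rule mult_left_mono) simp
  moreover have "m \<le> T * Suc (m div T)"
    unfolding mult_Suc_right using mult_div_mod_eq[of T m] mod_less_divisor[OF assms(1), of m]
    by linarith
  ultimately show ?thesis
    by (metis (mono_tags, lifting) of_nat_le_iff of_nat_mult order_trans)
qed

lemma first_hit_le_block_count:
  assumes "T > 0"
  shows "(if \<exists>t. P t then of_nat (LEAST t. P t) else \<infinity>)
    \<le> of_nat T * (\<Sum>n. of_bool (\<forall>t<n * T. \<not> P t) :: ennreal)"
proof (cases "\<exists>t. P t")
  case True
  have "\<forall>t<(LEAST t. P t). \<not> P t" using not_less_Least by blast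
  then show ?thesis unfolding if_P[OF True] by (rule of_nat_le_block_count[OF assms])
next
  case False
  let ?S = "of_nat T * (\<Sum>n. of_bool (\<forall>t<n * T. \<not> P t) :: ennreal)"
  have bound: "of_nat m \<le> ?S" for m
    using False of_nat_le_block_count[OF assms, of m P] by blast
  have "?S = \<infinity>"
  proof (rule ccontr)
    assume "?S \<noteq> \<infinity>"
    then obtain m where "?S < of_nat m" using ennreal_Ex_less_of_nat by (auto simp: less_top)
    with bound[of m] show False by simp
  qed
  then show ?thesis using False by simp
qed

lemma nn_integral_suminf_indicator_finite:
  assumes "\<And>n. E n \<in> sets M" "emeasure M (E 0) < \<infinity>" "0 \<le> r" "r < 1"
    and "\<And>n. emeasure M (E (Suc n)) \<le> ennreal r * emeasure M (E n)"
  shows "(\<integral>\<^sup>+\<omega>. (\<Sum>n. indicator (E n) \<omega>) \<partial>M) < \<infinity>"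
proof -
  have decay: "emeasure M (E n) \<le> ennreal (r ^ n) * emeasure M (E 0)" for n
  proof (induction n)
    case (Suc n)
    have "emeasure M (E (Suc n)) \<le> ennreal r * (ennreal (r ^ n) * emeasure M (E 0))"
      using assms(5)[of n] Suc by (meson mult_left_mono order_trans zero_le)
    then show ?case using assms(3) by (simp add: ennreal_mult mult.assoc)
  qed simp
  have "(\<integral>\<^sup>+\<omega>. (\<Sum>n. indicator (E n) \<omega>) \<partial>M) = (\<Sum>n. emeasure M (E n))"
    using assms(1) by (simp add: nn_integral_suminf)
  also have "\<dots> \<le> (\<Sum>n. ennreal (r ^ n) * emeasure M (E 0))"
    by (intro suminf_le summableI decay)
  also have "\<dots> = ennreal (\<Sum>n. r ^ n) * emeasure M (E 0)"
    using assms(3,4) by (simp add: suminf_ennreal2 summable_geometric)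
  also have "\<dots> < \<infinity>"
    using assms(2) by (simp add: ennreal_mult_less_top)
  finally show ?thesis .
qed

lemma (in prob_space) emeasure_Diff_le_if_indep:
  assumes "A \<in> events" "C \<in> events" "prob (A \<inter> C) = prob A * prob C" "p \<le> prob C"
  shows "emeasure M (A - C) \<le> ennreal (1 - p) * emeasure M A"
proof -
  have "prob (A - C) = prob A * (1 - prob C)"
    using finite_measure_Diff'[OF assms(1,2)] assms(3) by (simp add: algebra_simps)
  also have "\<dots> \<le> prob A * (1 - p)"
    using assms(4) by (intro mult_left_mono) auto
  finally have "ennreal (prob (A - C)) \<le> ennreal ((1 - p) * prob A)"
    by (simp add: ennreal_leI mult.commute)
  moreover have "0 \<le> 1 - p" using assms(4) prob_le_1[of C] by linarith
  ultimately show ?thesis by (simp add: emeasure_eq_measure ennreal_mult)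
qed

lemma emeasure_UN_le_cmult:
  assumes "countable I" "disjoint_family_on A I"
    and "\<And>i. i \<in> I \<Longrightarrow> A i \<in> sets M" "\<And>i. i \<in> I \<Longrightarrow> B i \<in> sets M" "\<And>i. i \<in> I \<Longrightarrow> B i \<subseteq> A i"
    and "\<And>i. i \<in> I \<Longrightarrow> emeasure M (B i) \<le> r * emeasure M (A i)"
  shows "emeasure M (\<Union>i\<in>I. B i) \<le> r * emeasure M (\<Union>i\<in>I. A i)"
proof -
  have "disjoint_family_on B I"
    using assms(2,5) by (fastforce simp: disjoint_family_on_def)
  then have "emeasure M (\<Union>i\<in>I. B i) = (\<integral>\<^sup>+i. emeasure M (B i) \<partial>count_space I)"
    by (intro emeasure_UN_countable) (use assms(1,4) in auto)
  also have "\<dots> \<le> (\<integral>\<^sup>+i. r * emeasure M (A i) \<partial>count_space I)"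
    using assms(6) by (intro nn_integral_mono) auto
  also have "\<dots> = r * emeasure M (\<Union>i\<in>I. A i)"
    using assms(1-3) by (simp add: nn_integral_cmult emeasure_UN_countable)
  finally show ?thesis .
qed

section \<open>One step of the SBBS\<close>

lemma carrier_cong:
  assumes "\<And>j. j \<in> \<zeta> \<Longrightarrow> b j = b' j"
  shows "carrier c \<zeta> b k = carrier c \<zeta> b' k"
  by (induction k) (use assms in \<open>auto simp: Let_def\<close>)

lemma sbbs_step_cong:
  assumes "\<And>j. j \<in> \<zeta> \<Longrightarrow> b j = b' j"
  shows "sbbs_step c \<zeta> b = sbbs_step c \<zeta> b'"
  unfolding sbbs_step_def using carrier_cong[of \<zeta> b b', OF assms] by simp

lemma zero_notin_sbbs_step: "0 \<notin> sbbs_step c \<zeta> b"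
  by (simp add: sbbs_step_def)

lemma card_sbbs_step_Int_add_carrier:
  "card (sbbs_step c \<zeta> b \<inter> {1..K}) + carrier c \<zeta> b K = card (\<zeta> \<inter> {1..K})"
proof (induction K)
  case 0
  then show ?case by simp
next
  case (Suc K)
  have split: "A \<inter> {1..Suc K} = (if Suc K \<in> A then insert (Suc K) (A \<inter> {1..K}) else A \<inter> {1..K})"
    for A :: "nat set"
    by (auto simp: le_Suc_eq)
  show ?case
    using Suc by (subst (1 2) split) (auto simp: sbbs_step_def Let_def card_insert_if)
qed

lemma carrier_beyond_balls:
  assumes "\<forall>x\<in>\<zeta>. x \<le> N"
  shows "carrier c \<zeta> b (N + j) = carrier c \<zeta> b N - j"
proof (induction j)
  case (Suc j)
  have "Suc (N + j) \<notin> \<zeta>" using assms by fastforce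
  then show ?case using Suc by (auto simp: Let_def)
qed simp

lemma sbbs_step_conserves_balls:
  assumes "finite \<zeta>" "0 \<notin> \<zeta>"
  shows "finite (sbbs_step c \<zeta> b)" "card (sbbs_step c \<zeta> b) = card \<zeta>"
proof -
  obtain N where N: "\<forall>x\<in>\<zeta>. x \<le> N" using assms(1) finite_nat_set_iff_bounded_le by blast
  define K where "K = N + card \<zeta>"
  have "x \<noteq> 0" if "x \<in> \<zeta>" for x using assms(2) that by metis
  then have \<zeta>_K: "\<zeta> \<inter> {1..K} = \<zeta>"
    using N by (force simp: K_def)
  have "carrier c \<zeta> b N \<le> card \<zeta>"
    using card_sbbs_step_Int_add_carrier[of c \<zeta> b N]
      card_mono[OF assms(1) Int_lower1[of \<zeta> "{1..N}"]]
    by linarith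
  then have empty: "carrier c \<zeta> b k = 0" if "k \<ge> K" for k
    using carrier_beyond_balls[OF N, of c b "k - N"] that by (simp add: K_def)
  have "sbbs_step c \<zeta> b \<subseteq> {1..K}"
  proof
    fix k assume k: "k \<in> sbbs_step c \<zeta> b"
    show "k \<in> {1..K}"
    proof (rule ccontr)
      assume "k \<notin> {1..K}"
      then have "k > K" "k \<ge> 1" using k by (auto simp: sbbs_step_def)
      then have "k \<notin> \<zeta>" "carrier c \<zeta> b k = 0" "carrier c \<zeta> b (k - 1) = 0"
        using N empty by (auto simp: K_def)
      then show False using k by (simp add: sbbs_step_def)
    qed
  qed
  moreover have "carrier c \<zeta> b K = 0" using empty by simp
  ultimately show "finite (sbbs_step c \<zeta> b)" "card (sbbs_step c \<zeta> b) = card \<zeta>"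
    using card_sbbs_step_Int_add_carrier[of c \<zeta> b K] \<zeta>_K
    by (auto intro: finite_subset simp: Int_absorb2)
qed

definition configs :: "nat \<Rightarrow> nat set set" where
  "configs d = {Z. finite Z \<and> 0 \<notin> Z \<and> card Z = d}"

lemma countable_configs: "countable (configs d)"
  by (rule countable_subset[OF _ countable_Collect_finite]) (auto simp: configs_def)

lemma sbbs_step_in_configs: "Z \<in> configs d \<Longrightarrow> sbbs_step c Z b \<in> configs d"
  using sbbs_step_conserves_balls zero_notin_sbbs_step by (auto simp: configs_def)

definition shift_ball :: "nat \<Rightarrow> nat set \<Rightarrow> nat set" where
  "shift_ball a Z = insert (Suc a) (Z - {a})"

lemma carrier_single_pickup:
  assumes "a \<in> Z" "Suc a \<notin> Z" "0 \<notin> Z" "c \<ge> 1" "\<And>k. k \<in> Z \<Longrightarrow> b k \<longleftrightarrow> k = a"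
  shows "carrier c Z b k = (if k = a then 1 else 0)"
proof (induction k)
  case 0
  have "a \<noteq> 0" using assms(1,3) by metis
  then show ?case by simp
next
  case (Suc k)
  have "enat 0 < c" using assms(4) by (metis zero_enat_def zero_less_one order_less_le_trans)
  then show ?case using Suc assms by (auto simp: Let_def)
qed

lemma sbbs_step_single_pickup:
  assumes "a \<in> Z" "Suc a \<notin> Z" "0 \<notin> Z" "c \<ge> 1" "\<And>k. k \<in> Z \<Longrightarrow> b k \<longleftrightarrow> k = a"
  shows "sbbs_step c Z b = shift_ball a Z"
proof -
  have "\<forall>x\<in>Z. 0 < x" using assms(3) by (metis gr0I)
  moreover have "carrier c Z b k = (if k = a then 1 else 0)" for k
    by (rule carrier_single_pickup[OF assms])
  ultimately show ?thesis
    using assms(1,2,3) unfolding sbbs_step_def shift_ball_def by (auto simp: set_eq_iff)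
qed

section \<open>Separating the balls by single shifts\<close>

lemma shift_ball_in_configs:
  assumes "Z \<in> configs d" "a \<in> Z" "Suc a \<notin> Z"
  shows "shift_ball a Z \<in> configs d"
  using assms card_gt_0_iff[of Z] by (auto simp: configs_def shift_ball_def card_Diff_singleton)

definition separated :: "nat set \<Rightarrow> bool" where
  "separated Z \<longleftrightarrow> (\<forall>x\<in>Z. Suc x \<notin> Z)"

lemma all_gaps_pos_if_separated:
  assumes "finite Z" "separated Z"
  shows "all_gaps_pos Z"
  unfolding all_gaps_pos_def gaps_def ball_positions_def Let_def
proof (intro allI impI)
  fix i
  let ?p = "sorted_list_of_set Z"
  assume "i < length (map (\<lambda>i. ?p ! (i + 1) - ?p ! i - 1) [0..<length ?p - 1])"
  then have i: "i + 1 < length ?p" by auto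
  have "?p ! i < ?p ! (i + 1)"
    using sorted_wrt_nth_less[OF strict_sorted_list_of_set, of i "i + 1" Z] i by simp
  moreover have "?p ! i \<in> Z" "?p ! (i + 1) \<in> Z"
    using i assms(1) nth_mem[of i ?p] nth_mem[of "i + 1" ?p] by auto
  then have "?p ! (i + 1) \<noteq> Suc (?p ! i)" using assms(2) unfolding separated_def by metis
  ultimately show "1 \<le> map (\<lambda>i. ?p ! (i + 1) - ?p ! i - 1) [0..<length ?p - 1] ! i"
    using i by auto
qed

fun shiftable :: "nat list \<Rightarrow> nat set \<Rightarrow> bool" where
  "shiftable [] Z \<longleftrightarrow> True"
| "shiftable (a # as) Z \<longleftrightarrow> a \<in> Z \<and> Suc a \<notin> Z \<and> shiftable as (shift_ball a Z)"

lemma shiftable_append: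
  "shiftable (xs @ ys) Z \<longleftrightarrow> shiftable xs Z \<and> shiftable ys (fold shift_ball xs Z)"
  by (induction xs arbitrary: Z) auto

lemma fold_shift_ball_in_configs:
  "shiftable as Z \<Longrightarrow> Z \<in> configs d \<Longrightarrow> fold shift_ball as Z \<in> configs d"
  by (induction as arbitrary: Z) (auto intro: shift_ball_in_configs)

lemma bounded_before_shifts:
  assumes "shiftable as Z" "\<forall>x\<in>fold shift_ball as Z. x \<le> N"
  shows "\<forall>x\<in>Z. x \<le> N"
  using assms
proof (induction as arbitrary: Z)
  case (Cons a as)
  then have "\<forall>x\<in>shift_ball a Z. x \<le> N" by auto
  then show ?case by (auto simp: shift_ball_def)
qed simp

lemma shiftable_insert_above:
  assumes "shiftable as Z" "\<forall>x\<in>fold shift_ball as Z. Suc x < m"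
  shows "shiftable as (insert m Z) \<and>
    fold shift_ball as (insert m Z) = insert m (fold shift_ball as Z)"
  using assms
proof (induction as arbitrary: Z)
  case (Cons a as)
  then have "\<forall>x\<in>shift_ball a Z. x \<le> m - 2"
    using bounded_before_shifts[of as "shift_ball a Z" "m - 2"] by fastforce
  then have "Suc (Suc a) \<le> m" by (auto simp: shift_ball_def)
  then have "shift_ball a (insert m Z) = insert m (shift_ball a Z)" by (auto simp: shift_ball_def)
  then show ?case using Cons \<open>Suc (Suc a) \<le> m\<close> by auto
qed simp

lemma shiftable_top_ball:
  assumes "\<forall>x\<in>Z. x < M"
  shows "shiftable [M..<M + k] (insert M Z) \<and>
    fold shift_ball [M..<M + k] (insert M Z) = insert (M + k) Z"
proof (induction k)
  case (Suc k)
  have "M + k \<notin> Z" "Suc (M + k) \<notin> Z" using assms by auto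
  then have "shift_ball (M + k) (insert (M + k) Z) = insert (M + Suc k) Z"
    by (auto simp: shift_ball_def)
  then show ?case using Suc \<open>Suc (M + k) \<notin> Z\<close> by (simp add: shiftable_append)
qed simp

lemma exists_separating_shifts:
  assumes "finite Z" "\<forall>x\<in>Z. x < N"
  shows "\<exists>as. shiftable as Z \<and> length as \<le> card Z * card Z \<and> separated (fold shift_ball as Z) \<and>
    (\<forall>x\<in>fold shift_ball as Z. x < N + card Z)"
  using assms
proof (induction "card Z" arbitrary: Z N)
  case 0
  then show ?case by (intro exI[of _ "[]"]) (auto simp: separated_def)
next
  case (Suc n)
  define M where "M = Max Z"
  define Z' where "Z' = Z - {M}"
  have "M \<in> Z" using Suc.hyps(2) Suc.prems(1) by (metis M_def Max_in card.empty nat.simps(3))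
  then have Z: "Z = insert M Z'" "M < N" "card Z' = n" "finite Z'"
    using Suc.hyps(2) Suc.prems by (auto simp: Z'_def)
  have below_M: "\<forall>x\<in>Z'. x < M"
    using Suc.prems(1) by (auto simp: Z'_def M_def order.not_eq_order_implies_strict)
  obtain as' where as': "shiftable as' Z'" "length as' \<le> n * n" "separated (fold shift_ball as' Z')"
    "\<forall>x\<in>fold shift_ball as' Z'. x < M + n"
    using Suc.hyps(1)[of Z' M] Z below_M by auto
  define m where "m = M + Suc n"
  have top: "shiftable [M..<m] Z" "fold shift_ball [M..<m] Z = insert m Z'"
    using shiftable_top_ball[OF below_M, of "Suc n"] Z(1) by (simp_all add: m_def)
  have "\<forall>x\<in>fold shift_ball as' Z'. Suc x < m" using as'(4) by (auto simp: m_def)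
  then have lift: "shiftable as' (insert m Z')"
      "fold shift_ball as' (insert m Z') = insert m (fold shift_ball as' Z')"
    using shiftable_insert_above[OF as'(1)] by auto
  show ?case
  proof (intro exI[of _ "[M..<m] @ as'"] conjI)
    show "shiftable ([M..<m] @ as') Z" using top lift by (simp add: shiftable_append)
    show "length ([M..<m] @ as') \<le> card Z * card Z"
      using as'(2) by (simp add: m_def flip: Suc.hyps(2))
    have final: "fold shift_ball ([M..<m] @ as') Z = insert m (fold shift_ball as' Z')"
      using top lift by simp
    show "separated (fold shift_ball ([M..<m] @ as') Z)"
      unfolding final using as'(3,4) by (auto simp: separated_def m_def)
    show "\<forall>x\<in>fold shift_ball ([M..<m] @ as') Z. x < N + card Z"
      unfolding final using as'(4) Z(2) Suc.hyps(2) by (auto simp: m_def)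
  qed
qed

definition separating_shifts :: "nat set \<Rightarrow> nat list" where
  "separating_shifts Z =
    (SOME as. shiftable as Z \<and> length as \<le> card Z * card Z \<and> separated (fold shift_ball as Z))"

lemma separating_shifts:
  assumes "finite Z"
  shows "shiftable (separating_shifts Z) Z" "length (separating_shifts Z) \<le> card Z * card Z"
    "separated (fold shift_ball (separating_shifts Z) Z)"
proof -
  obtain N where "\<forall>x\<in>Z. x < N" using assms finite_nat_set_iff_bounded by blast
  then have "\<exists>as. shiftable as Z \<and> length as \<le> card Z * card Z \<and> separated (fold shift_ball as Z)"
    using exists_separating_shifts[OF assms] by blast
  from someI_ex[OF this] show "shiftable (separating_shifts Z) Z"
    "length (separating_shifts Z) \<le> card Z * card Z"
    "separated (fold shift_ball (separating_shifts Z) Z)"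
    unfolding separating_shifts_def by blast+
qed

section \<open>The coin field\<close>

abbreviation coin :: "real \<Rightarrow> bool measure" where
  "coin \<epsilon> \<equiv> measure_pmf (bernoulli_pmf (1 - \<epsilon>))"

lemma space_coin_space [simp]: "space (coin_space \<epsilon>) = UNIV"
  by (simp add: coin_space_def space_PiM)

lemma prob_space_coin_space: "prob_space (coin_space \<epsilon>)"
  unfolding coin_space_def by (intro prob_space_PiM measure_pmf.prob_space_axioms)

lemma product_prob_space_coin: "product_prob_space (\<lambda>_. coin \<epsilon>)"
  by (intro product_prob_spaceI measure_pmf.prob_space_axioms)

definition determined_by :: "'i set \<Rightarrow> (('i \<Rightarrow> 'a) \<Rightarrow> 'b) \<Rightarrow> bool" where
  "determined_by J F \<longleftrightarrow> (\<forall>\<omega> \<omega>'. (\<forall>i\<in>J. \<omega> i = \<omega>' i) \<longrightarrow> F \<omega> = F \<omega>')"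

lemma determined_byD: "determined_by J F \<Longrightarrow> (\<And>i. i \<in> J \<Longrightarrow> \<omega> i = \<omega>' i) \<Longrightarrow> F \<omega> = F \<omega>'"
  unfolding determined_by_def by blast

lemma determined_by_compose2:
  "determined_by J F \<Longrightarrow> determined_by J G \<Longrightarrow> determined_by J (\<lambda>\<omega>. H (F \<omega>) (G \<omega>))"
  unfolding determined_by_def by metis

lemma coin_cylinder_in_sets:
  assumes "finite J"
  shows "{\<omega>. \<forall>i\<in>J. \<omega> i = v i} \<in> sets (coin_space \<epsilon>)"
proof -
  have "{\<omega>. \<omega> i = v i} \<in> sets (coin_space \<epsilon>)" for i
    using measurable_sets[OF measurable_component_singleton[of i UNIV "\<lambda>_. coin \<epsilon>"], of "{v i}"]
    by (simp add: coin_space_def vimage_def space_PiM)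
  then have "{\<omega> \<in> space (coin_space \<epsilon>). \<forall>i\<in>J. \<omega> i = v i} \<in> sets (coin_space \<epsilon>)"
    using assms by (intro sets.sets_Collect_finite_All) auto
  then show ?thesis by simp
qed

lemma measurable_coin_space_if_determined_by:
  assumes "finite J" "determined_by J F" "\<And>\<omega>. F \<omega> \<in> A"
  shows "F \<in> measurable (coin_space \<epsilon>) (count_space A)"
proof -
  let ?h = "\<lambda>\<omega>. {i\<in>J. \<omega> i}"
  have "?h \<in> measurable (coin_space \<epsilon>) (count_space (Pow J))"
  proof (subst measurable_count_space_eq_countable)
    show "countable (Pow J)" using assms(1) by (simp add: countable_finite)
    show "?h \<in> space (coin_space \<epsilon>) \<rightarrow> Pow J \<and>
      (\<forall>S\<in>Pow J. ?h -` {S} \<inter> space (coin_space \<epsilon>) \<in> sets (coin_space \<epsilon>))"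
    proof (intro conjI ballI)
      fix S assume "S \<in> Pow J"
      then have "?h -` {S} \<inter> space (coin_space \<epsilon>) = {\<omega>. \<forall>i\<in>J. \<omega> i = (i \<in> S)}" by auto
      then show "?h -` {S} \<inter> space (coin_space \<epsilon>) \<in> sets (coin_space \<epsilon>)"
        using coin_cylinder_in_sets[OF assms(1)] by simp
    qed auto
  qed
  moreover have "(\<lambda>S. F (\<lambda>i. i \<in> S)) \<in> measurable (count_space (Pow J)) (count_space A)"
    using assms(3) by simp
  moreover have "F (\<lambda>i. i \<in> ?h \<omega>) = F \<omega>" for \<omega>
    by (rule determined_byD[OF assms(2)]) simp
  ultimately show ?thesis
    using measurable_compose[of ?h _ _ "\<lambda>S. F (\<lambda>i. i \<in> S)"] by simp
qed

lemma indep_vars_coin_coordinates: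
  "prob_space.indep_vars (coin_space \<epsilon>) (\<lambda>_. coin \<epsilon>) (\<lambda>i \<omega>. \<omega> i) UNIV"
proof -
  interpret P: prob_space "coin_space \<epsilon>" by (rule prob_space_coin_space)
  interpret PP: product_prob_space "\<lambda>_. coin \<epsilon>" "UNIV :: (nat \<times> nat) set"
    by (rule product_prob_space_coin)
  have "distr (coin_space \<epsilon>) (coin \<epsilon>) (\<lambda>\<omega>. \<omega> i) = coin \<epsilon>" for i
    unfolding coin_space_def by (rule PP.PiM_component) simp
  then have "PiM UNIV (\<lambda>i. distr (coin_space \<epsilon>) (coin \<epsilon>) (\<lambda>\<omega>. \<omega> i)) = coin_space \<epsilon>"
    by (simp add: coin_space_def)
  then show ?thesis
    by (subst P.indep_vars_iff_distr_eq_PiM)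
      (simp_all add: coin_space_def restrict_UNIV measurable_component_singleton)
qed

lemma determined_by_restrict_vimage:
  assumes "S \<in> sets (coin_space \<epsilon>)" "determined_by J (\<lambda>\<omega>. \<omega> \<in> S)"
  shows "\<exists>A \<in> sets (PiM J (\<lambda>_. coin \<epsilon>)). (\<lambda>\<omega>. restrict \<omega> J) -` A = S"
proof -
  define extend :: "(nat \<times> nat \<Rightarrow> bool) \<Rightarrow> nat \<times> nat \<Rightarrow> bool" where
    "extend x = (\<lambda>i. if i \<in> J then x i else False)" for x
  have "extend \<in> measurable (PiM J (\<lambda>_. coin \<epsilon>)) (coin_space \<epsilon>)"
    unfolding coin_space_def extend_def
    by (rule measurable_PiM_single') (auto simp: space_PiM intro: measurable_component_singleton)
  then have "extend -` S \<inter> space (PiM J (\<lambda>_. coin \<epsilon>)) \<in> sets (PiM J (\<lambda>_. coin \<epsilon>))"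
    using assms(1) by (rule measurable_sets)
  moreover have "extend (restrict \<omega> J) \<in> S \<longleftrightarrow> \<omega> \<in> S" for \<omega>
    by (rule determined_byD[OF assms(2)]) (simp add: extend_def)
  ultimately show ?thesis
    by (intro bexI[of _ "extend -` S \<inter> space (PiM J (\<lambda>_. coin \<epsilon>))"]) (auto simp: space_PiM)
qed

lemma prob_coin_Int_eq_mult_if_determined_by_disjoint:
  assumes "S1 \<in> sets (coin_space \<epsilon>)" "S2 \<in> sets (coin_space \<epsilon>)" "J1 \<inter> J2 = {}"
    and "determined_by J1 (\<lambda>\<omega>. \<omega> \<in> S1)" "determined_by J2 (\<lambda>\<omega>. \<omega> \<in> S2)"
  shows "measure (coin_space \<epsilon>) (S1 \<inter> S2) = measure (coin_space \<epsilon>) S1 * measure (coin_space \<epsilon>) S2"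
proof -
  interpret P: prob_space "coin_space \<epsilon>" by (rule prob_space_coin_space)
  obtain A1 A2 where A: "A1 \<in> sets (PiM J1 (\<lambda>_. coin \<epsilon>))" "(\<lambda>\<omega>. restrict \<omega> J1) -` A1 = S1"
    "A2 \<in> sets (PiM J2 (\<lambda>_. coin \<epsilon>))" "(\<lambda>\<omega>. restrict \<omega> J2) -` A2 = S2"
    using determined_by_restrict_vimage assms by metis
  have indep: "P.indep_var (PiM J1 (\<lambda>_. coin \<epsilon>)) (\<lambda>\<omega>. restrict \<omega> J1)
    (PiM J2 (\<lambda>_. coin \<epsilon>)) (\<lambda>\<omega>. restrict \<omega> J2)"
    using P.indep_var_restrict[OF indep_vars_coin_coordinates assms(3)] by simp
  have "(\<lambda>\<omega>. (restrict \<omega> J1, restrict \<omega> J2)) -` (A1 \<times> A2) = S1 \<inter> S2"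
    using A(2,4) by auto
  with P.indep_varD[OF indep A(1,3)] show ?thesis
    using A(2,4) by simp
qed

lemma measure_coin_cylinder_ge:
  assumes "finite J" "0 \<le> \<epsilon>" "\<epsilon> \<le> 1"
  shows "min \<epsilon> (1 - \<epsilon>) ^ card J \<le> measure (coin_space \<epsilon>) {\<omega>. \<forall>i\<in>J. \<omega> i = v i}"
proof -
  interpret PP: product_prob_space "\<lambda>_. coin \<epsilon>" "UNIV :: (nat \<times> nat) set"
    by (rule product_prob_space_coin)
  have "emeasure (coin_space \<epsilon>) {\<omega>. \<forall>i\<in>J. \<omega> i = v i} = (\<Prod>i\<in>J. emeasure (coin \<epsilon>) {v i})"
    using PP.emeasure_PiM_Collect[of J "\<lambda>i. {v i}"] assms(1) by (simp add: coin_space_def space_PiM)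
  also have "\<dots> = ennreal (\<Prod>i\<in>J. if v i then 1 - \<epsilon> else \<epsilon>)"
  proof -
    have "pmf (bernoulli_pmf (1 - \<epsilon>)) b = (if b then 1 - \<epsilon> else \<epsilon>)" for b
      using assms(2,3) by simp
    then show ?thesis using assms(2,3) by (simp add: emeasure_pmf_single prod_ennreal)
  qed
  finally have "measure (coin_space \<epsilon>) {\<omega>. \<forall>i\<in>J. \<omega> i = v i} = (\<Prod>i\<in>J. if v i then 1 - \<epsilon> else \<epsilon>)"
    using assms(2,3) by (simp add: measure_def prod_nonneg)
  moreover have "min \<epsilon> (1 - \<epsilon>) ^ card J \<le> (\<Prod>i\<in>J. if v i then 1 - \<epsilon> else \<epsilon>)"
    using assms(2,3) prod_mono[of J "\<lambda>_. min \<epsilon> (1 - \<epsilon>)" "\<lambda>i. if v i then 1 - \<epsilon> else \<epsilon>"] by auto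
  ultimately show ?thesis by simp
qed

section \<open>Trajectories\<close>

lemma sbbs_traj_in_configs: "\<zeta>0 \<in> configs d \<Longrightarrow> sbbs_traj c \<zeta>0 \<omega> t \<in> configs d"
  by (induction t) (auto intro: sbbs_step_in_configs)

lemma sbbs_traj_determined_by_past: "determined_by {i. fst i < t} (\<lambda>\<omega>. sbbs_traj c \<zeta>0 \<omega> t)"
proof -
  have "(\<forall>i. fst i < t \<longrightarrow> \<omega> i = \<omega>' i) \<longrightarrow> sbbs_traj c \<zeta>0 \<omega> t = sbbs_traj c \<zeta>0 \<omega>' t" for \<omega> \<omega>'
    by (induction t) auto
  then show ?thesis unfolding determined_by_def by auto
qed

lemma measurable_sbbs_traj:
  assumes "\<zeta>0 \<in> configs d"
  shows "(\<lambda>\<omega>. sbbs_traj c \<zeta>0 \<omega> t) \<in> measurable (coin_space \<epsilon>) (count_space (configs d))"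
proof (induction t)
  case 0
  then show ?case using assms by simp
next
  case (Suc t)
  have "(\<lambda>\<omega>. sbbs_step c Z (\<lambda>k. \<omega> (t, k))) \<in> measurable (coin_space \<epsilon>) (count_space (configs d))"
    if "Z \<in> configs d" for Z
  proof (rule measurable_coin_space_if_determined_by)
    show "finite (Pair t ` Z)" using that by (simp add: configs_def)
    show "determined_by (Pair t ` Z) (\<lambda>\<omega>. sbbs_step c Z (\<lambda>k. \<omega> (t, k)))"
      unfolding determined_by_def by (intro allI impI sbbs_step_cong) auto
  qed (use that sbbs_step_in_configs in blast)
  from measurable_compose_countable'[OF this Suc countable_configs] show ?case by simp
qed

lemma sbbs_traj_event_in_sets:
  assumes "\<zeta>0 \<in> configs d"
  shows "{\<omega>. P (sbbs_traj c \<zeta>0 \<omega> t)} \<in> sets (coin_space \<epsilon>)"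
proof -
  have "(\<lambda>\<omega>. sbbs_traj c \<zeta>0 \<omega> t) -` {Z \<in> configs d. P Z} \<inter> space (coin_space \<epsilon>)
    \<in> sets (coin_space \<epsilon>)"
    by (rule measurable_sets[OF measurable_sbbs_traj[OF assms]]) simp
  then show ?thesis using sbbs_traj_in_configs[OF assms] by (simp add: vimage_def)
qed

definition shift_coins :: "nat \<Rightarrow> nat list \<Rightarrow> nat set \<Rightarrow> (nat \<times> nat) set" where
  "shift_coins t0 as Z = (\<Union>s<length as. Pair (t0 + s) ` fold shift_ball (take s as) Z)"

text \<open>At time \<open>t0 + s\<close> exactly the ball at \<open>as ! s\<close> is picked up, which performs the
  \<open>s\<close>-th shift.\<close>
definition follows_shifts :: "nat \<Rightarrow> nat list \<Rightarrow> nat set \<Rightarrow> (nat \<times> nat \<Rightarrow> bool) set" where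
  "follows_shifts t0 as Z = {\<omega>. \<forall>i\<in>shift_coins t0 as Z. \<omega> i \<longleftrightarrow> snd i = as ! (fst i - t0)}"

lemma finite_card_shift_coins:
  assumes "shiftable as Z" "Z \<in> configs d"
  shows "finite (shift_coins t0 as Z)" "card (shift_coins t0 as Z) \<le> length as * d"
proof -
  have configs: "fold shift_ball (take s as) Z \<in> configs d" for s
    using assms shiftable_append[of "take s as" "drop s as" Z]
    by (auto intro: fold_shift_ball_in_configs)
  then show "finite (shift_coins t0 as Z)" by (auto simp: shift_coins_def configs_def)
  have "card (shift_coins t0 as Z)
      \<le> (\<Sum>s<length as. card (Pair (t0 + s) ` fold shift_ball (take s as) Z))"
    unfolding shift_coins_def by (rule card_UN_le) simp
  also have "\<dots> \<le> (\<Sum>s<length as. d)"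
    using configs card_image_le by (intro sum_mono) (fastforce simp: configs_def)
  finally show "card (shift_coins t0 as Z) \<le> length as * d" by simp
qed

lemma follows_shifts_determined_by_future:
  "determined_by {i. t0 \<le> fst i} (\<lambda>\<omega>. \<omega> \<in> follows_shifts t0 as Z)"
  unfolding determined_by_def follows_shifts_def shift_coins_def by auto

lemma measure_follows_shifts_ge:
  assumes "shiftable as Z" "Z \<in> configs d" "0 \<le> \<epsilon>" "\<epsilon> \<le> 1"
  shows "min \<epsilon> (1 - \<epsilon>) ^ (length as * d) \<le> measure (coin_space \<epsilon>) (follows_shifts t0 as Z)"
proof -
  have "min \<epsilon> (1 - \<epsilon>) ^ (length as * d) \<le> min \<epsilon> (1 - \<epsilon>) ^ card (shift_coins t0 as Z)"
    using finite_card_shift_coins[OF assms(1,2)] assms(3,4) by (intro power_decreasing) auto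
  also have "\<dots> \<le> measure (coin_space \<epsilon>) (follows_shifts t0 as Z)"
    unfolding follows_shifts_def
    by (rule measure_coin_cylinder_ge)
      (use finite_card_shift_coins[OF assms(1,2)] assms(3,4) in auto)
  finally show ?thesis .
qed

lemma sbbs_traj_follows_shifts:
  assumes "c \<ge> 1" "shiftable as Z" "Z \<in> configs d"
    and "sbbs_traj c \<zeta>0 \<omega> t0 = Z" "\<omega> \<in> follows_shifts t0 as Z"
  shows "s \<le> length as \<Longrightarrow> sbbs_traj c \<zeta>0 \<omega> (t0 + s) = fold shift_ball (take s as) Z"
proof (induction s)
  case (Suc s)
  let ?W = "fold shift_ball (take s as) Z"
  have s: "s < length as" using Suc.prems by simp
  then have "shiftable (take s as @ as ! s # drop (Suc s) as) Z"
    using assms(2) id_take_nth_drop by metis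
  then have "shiftable (take s as) Z" "as ! s \<in> ?W" "Suc (as ! s) \<notin> ?W"
    by (simp_all add: shiftable_append)
  then have "as ! s \<in> ?W" "Suc (as ! s) \<notin> ?W" "?W \<in> configs d"
    using assms(3) fold_shift_ball_in_configs by blast+
  moreover have "\<omega> (t0 + s, k) \<longleftrightarrow> k = as ! s" if "k \<in> ?W" for k
    using assms(5) s that by (auto simp: follows_shifts_def shift_coins_def)
  ultimately have "sbbs_step c ?W (\<lambda>k. \<omega> (t0 + s, k)) = shift_ball (as ! s) ?W"
    using assms(1) by (intro sbbs_step_single_pickup) (auto simp: configs_def)
  then show ?case using Suc s by (simp add: take_Suc_conv_app_nth)
qed (use assms(4) in simp)

section \<open>No hit in a block of \<open>d\<^sup>2 + 1\<close> steps\<close>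

lemma follows_shifts_in_sets:
  assumes "shiftable as Z" "Z \<in> configs d"
  shows "follows_shifts t0 as Z \<in> sets (coin_space \<epsilon>)"
  unfolding follows_shifts_def
  by (rule coin_cylinder_in_sets) (rule finite_card_shift_coins[OF assms])

lemma measure_follows_separating_shifts_ge:
  assumes "Z \<in> configs d" "0 \<le> \<epsilon>" "\<epsilon> \<le> 1"
  shows "min \<epsilon> (1 - \<epsilon>) ^ (d * d * d)
    \<le> measure (coin_space \<epsilon>) (follows_shifts t (separating_shifts Z) Z)"
proof -
  have Z: "finite Z" "card Z = d" using assms(1) by (auto simp: configs_def)
  then have "length (separating_shifts Z) * d \<le> d * d * d"
    using separating_shifts(2)[of Z] by simp
  then have "min \<epsilon> (1 - \<epsilon>) ^ (d * d * d) \<le> min \<epsilon> (1 - \<epsilon>) ^ (length (separating_shifts Z) * d)"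
    using assms(2,3) by (intro power_decreasing) auto
  also have "\<dots> \<le> measure (coin_space \<epsilon>) (follows_shifts t (separating_shifts Z) Z)"
    by (rule measure_follows_shifts_ge[OF separating_shifts(1)[OF Z(1)] assms])
  finally show ?thesis .
qed

lemma hit_if_follows_separating_shifts:
  assumes "c \<ge> 1" "\<zeta>0 \<in> configs d" "sbbs_traj c \<zeta>0 \<omega> t = Z"
    and "\<omega> \<in> follows_shifts t (separating_shifts Z) Z"
  shows "\<exists>s\<le>d * d. all_gaps_pos (sbbs_traj c \<zeta>0 \<omega> (t + s))"
proof -
  have Z: "Z \<in> configs d" using sbbs_traj_in_configs[OF assms(2)] assms(3) by blast
  then have shifts: "shiftable (separating_shifts Z) Z" "length (separating_shifts Z) \<le> d * d"
    "separated (fold shift_ball (separating_shifts Z) Z)"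
    using separating_shifts[of Z] by (auto simp: configs_def)
  have "sbbs_traj c \<zeta>0 \<omega> (t + length (separating_shifts Z))
      = fold shift_ball (separating_shifts Z) Z"
    using sbbs_traj_follows_shifts[OF assms(1) shifts(1) Z assms(3,4)] by simp
  moreover have "finite (fold shift_ball (separating_shifts Z) Z)"
    using fold_shift_ball_in_configs[OF shifts(1) Z] by (simp add: configs_def)
  ultimately show ?thesis
    using all_gaps_pos_if_separated shifts(2,3) by metis
qed

definition no_hit_before :: "enat \<Rightarrow> nat set \<Rightarrow> nat \<Rightarrow> (nat \<times> nat \<Rightarrow> bool) set" where
  "no_hit_before c \<zeta>0 t = {\<omega>. \<forall>s<t. \<not> all_gaps_pos (sbbs_traj c \<zeta>0 \<omega> s)}"

lemma no_hit_before_in_sets: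
  assumes "\<zeta>0 \<in> configs d"
  shows "no_hit_before c \<zeta>0 t \<in> sets (coin_space \<epsilon>)"
proof -
  have "no_hit_before c \<zeta>0 t =
      {\<omega> \<in> space (coin_space \<epsilon>). \<forall>s\<in>{..<t}. \<not> all_gaps_pos (sbbs_traj c \<zeta>0 \<omega> s)}"
    by (auto simp: no_hit_before_def)
  also have "\<dots> \<in> sets (coin_space \<epsilon>)"
    using sbbs_traj_event_in_sets[OF assms] by (intro sets.sets_Collect_finite_All) auto
  finally show ?thesis .
qed

lemma no_hit_before_determined_by_past:
  "determined_by {i. fst i < t} (\<lambda>\<omega>. \<omega> \<in> no_hit_before c \<zeta>0 t)"
proof (unfold determined_by_def, intro allI impI)
  fix \<omega> \<omega>' :: "nat \<times> nat \<Rightarrow> bool" assume "\<forall>i\<in>{i. fst i < t}. \<omega> i = \<omega>' i"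
  then have "sbbs_traj c \<zeta>0 \<omega> s = sbbs_traj c \<zeta>0 \<omega>' s" if "s < t" for s
    using that by (intro determined_byD[OF sbbs_traj_determined_by_past]) auto
  then show "(\<omega> \<in> no_hit_before c \<zeta>0 t) = (\<omega>' \<in> no_hit_before c \<zeta>0 t)"
    by (simp add: no_hit_before_def)
qed

lemma gamma_time_le_no_hit_count:
  assumes "T > 0"
  shows "gamma_time c \<zeta>0 \<omega> \<le> of_nat T * (\<Sum>n. indicator (no_hit_before c \<zeta>0 (n * T)) \<omega>)"
  using first_hit_le_block_count[OF assms, of "\<lambda>t. all_gaps_pos (sbbs_traj c \<zeta>0 \<omega> t)"]
  by (simp add: gamma_time_def no_hit_before_def indicator_def)

lemma emeasure_no_hit_before_le:
  assumes "c \<ge> 1" "\<zeta>0 \<in> configs d" "0 \<le> \<epsilon>" "\<epsilon> \<le> 1"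
  defines "p \<equiv> min \<epsilon> (1 - \<epsilon>) ^ (d * d * d)"
  shows "emeasure (coin_space \<epsilon>) (no_hit_before c \<zeta>0 (t + Suc (d * d)))
    \<le> ennreal (1 - p) * emeasure (coin_space \<epsilon>) (no_hit_before c \<zeta>0 t)"
proof -
  interpret P: prob_space "coin_space \<epsilon>" by (rule prob_space_coin_space)
  define A where "A Z = no_hit_before c \<zeta>0 t \<inter> {\<omega>. sbbs_traj c \<zeta>0 \<omega> t = Z}" for Z
  define C where "C Z = follows_shifts t (separating_shifts Z) Z" for Z
  have A_sets: "A Z \<in> P.events" for Z
    unfolding A_def
    by (rule sets.Int[OF no_hit_before_in_sets[OF assms(2)] sbbs_traj_event_in_sets[OF assms(2)]])
  have C_sets: "C Z \<in> P.events" if "Z \<in> configs d" for Z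
    unfolding C_def using that separating_shifts(1)[of Z]
    by (intro follows_shifts_in_sets) (auto simp: configs_def)
  have "no_hit_before c \<zeta>0 (t + Suc (d * d)) \<subseteq> (\<Union>Z\<in>configs d. A Z - C Z)"
    using hit_if_follows_separating_shifts[OF assms(1,2)] sbbs_traj_in_configs[OF assms(2)]
    by (fastforce simp: A_def C_def no_hit_before_def)
  then have "emeasure (coin_space \<epsilon>) (no_hit_before c \<zeta>0 (t + Suc (d * d)))
    \<le> emeasure (coin_space \<epsilon>) (\<Union>Z\<in>configs d. A Z - C Z)"
    using A_sets C_sets countable_configs by (intro emeasure_mono) (auto intro: sets.countable_UN'')
  also have "\<dots> \<le> ennreal (1 - p) * emeasure (coin_space \<epsilon>) (\<Union>Z\<in>configs d. A Z)"
  proof (rule emeasure_UN_le_cmult)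
    fix Z assume Z: "Z \<in> configs d"
    have "determined_by {i. fst i < t} (\<lambda>\<omega>. \<omega> \<in> no_hit_before c \<zeta>0 t \<and> sbbs_traj c \<zeta>0 \<omega> t = Z)"
      using determined_by_compose2[OF no_hit_before_determined_by_past sbbs_traj_determined_by_past,
          where H = "\<lambda>a b. a \<and> b = Z"] by simp
    then have past: "determined_by {i. fst i < t} (\<lambda>\<omega>. \<omega> \<in> A Z)" by (simp add: A_def)
    have future: "determined_by {i. t \<le> fst i} (\<lambda>\<omega>. \<omega> \<in> C Z)"
      unfolding C_def by (rule follows_shifts_determined_by_future)
    have "{i. fst i < t} \<inter> {i. t \<le> fst i} = {}" by auto
    then have "P.prob (A Z \<inter> C Z) = P.prob (A Z) * P.prob (C Z)"
      by (rule prob_coin_Int_eq_mult_if_determined_by_disjoint[OF A_sets C_sets[OF Z] _ past future])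
    moreover have "p \<le> P.prob (C Z)"
      unfolding p_def C_def by (rule measure_follows_separating_shifts_ge[OF Z assms(3,4)])
    ultimately show "emeasure (coin_space \<epsilon>) (A Z - C Z)
      \<le> ennreal (1 - p) * emeasure (coin_space \<epsilon>) (A Z)"
      by (rule P.emeasure_Diff_le_if_indep[OF A_sets C_sets[OF Z]])
  qed (use A_sets C_sets countable_configs in \<open>auto simp: A_def disjoint_family_on_def\<close>)
  also have "\<dots> \<le> ennreal (1 - p) * emeasure (coin_space \<epsilon>) (no_hit_before c \<zeta>0 t)"
    by (intro mult_left_mono emeasure_mono no_hit_before_in_sets[OF assms(2)]) (auto simp: A_def)
  finally show ?thesis .
qed

theorem lemma5p1:
  fixes d :: nat and \<epsilon> :: real and c :: enat and x :: "nat list" and \<zeta>0 :: "nat set"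
  assumes "d \<ge> 2" and "0 < \<epsilon>" and "\<epsilon> < 1" and "c \<ge> 1"
    and "length x = d - 1"
    and "finite \<zeta>0" and "0 \<notin> \<zeta>0" and "card \<zeta>0 = d"
    and "gaps \<zeta>0 = x"
  shows "(\<integral>\<^sup>+ \<omega>. gamma_time c \<zeta>0 \<omega> \<partial>coin_space \<epsilon>) < \<infinity>"
proof -
  interpret prob_space "coin_space \<epsilon>" by (rule prob_space_coin_space)
  have \<zeta>0: "\<zeta>0 \<in> configs d" using assms(6-8) by (simp add: configs_def)
  define T where "T = Suc (d * d)"
  define p where "p = min \<epsilon> (1 - \<epsilon>) ^ (d * d * d)"
  define E where "E n = no_hit_before c \<zeta>0 (n * T)" for n
  have E_sets: "E n \<in> sets (coin_space \<epsilon>)" for n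
    unfolding E_def by (rule no_hit_before_in_sets[OF \<zeta>0])
  have decay:
    "emeasure (coin_space \<epsilon>) (E (Suc n)) \<le> ennreal (1 - p) * emeasure (coin_space \<epsilon>) (E n)" for n
    using emeasure_no_hit_before_le[OF assms(4) \<zeta>0, of \<epsilon> "n * T"] assms(2,3)
    by (simp add: E_def T_def p_def algebra_simps)
  have "0 < p" "p \<le> 1" using assms(2,3) by (auto simp: p_def intro: power_le_one)
  then have blocks: "(\<integral>\<^sup>+\<omega>. (\<Sum>n. indicator (E n) \<omega>) \<partial>coin_space \<epsilon>) < \<infinity>"
    using E_sets decay
    by (intro nn_integral_suminf_indicator_finite[where r = "1 - p"])
      (auto simp: emeasure_finite less_top[symmetric])
  have "(\<integral>\<^sup>+\<omega>. gamma_time c \<zeta>0 \<omega> \<partial>coin_space \<epsilon>)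
      \<le> (\<integral>\<^sup>+\<omega>. of_nat T * (\<Sum>n. indicator (E n) \<omega>) \<partial>coin_space \<epsilon>)"
    unfolding E_def by (intro nn_integral_mono gamma_time_le_no_hit_count) (simp add: T_def)
  also have "\<dots> = of_nat T * (\<integral>\<^sup>+\<omega>. (\<Sum>n. indicator (E n) \<omega>) \<partial>coin_space \<epsilon>)"
    by (intro nn_integral_cmult borel_measurable_suminf_order borel_measurable_indicator E_sets)
  also have "\<dots> < \<infinity>"
    using blocks by (simp add: ennreal_mult_less_top of_nat_less_top)
  finally show ?thesis .
qed

end
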